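(* Let $Y=\mu^*(L^* )^T+E$ where $E\in\mathbb{R}^{p\times n}$ has independent standard normal entries, and define the constrained maximum likelihood estimator $$(\widehat{\mu},\widehat{L})\in\operatorname*{argmin}_{(\mu,L)\in\Theta_K}\|Y-\mu L^T\|_F^2,\qquad \Theta_K=\{(\mu,L):\mu\in\mathbb{R}^{p\times K},\,L\in\mathcal{L}_K,\,|\mathrm{supp}(\mu)|\le s\}.$$ Assume $K\log n\lesssim\log p$ and $p/n\to\infty$. Then there is a constant $c>0$ such that $$\sup_{(\mu^*,L^* )\in\Theta^*_K}\mathbb{E}_*\left\{\|\mu^*(L^* )^T-\widehat{\mu}\widehat{L}^T\|_F^2\right\}\le c\,(n\log K+s\log p).$$
   Context: Setting: $n,p,s,K$ are positive integers, $p=p_n$, $s=s_n\to\infty$ and possibly $K=K_n$ depend on $n$, and asymptotics are as $n\to\infty$; $a\lesssim b$ means $a\le C'b$ for a constant $C'>0$ independent of $n$. $\mathcal{L}_K$ is the set of $n\times K$ matrices $L=[l_1,\dots,l_n]^T$ with each row $l_i\in\{0,1\}^K$ having exactly one entry equal to $1$ (cluster-assignment matrices). For $\mu=[\mu_1,\dots,\mu_K]\in\mathbb{R}^{p\times K}$, $\mathrm{supp}(\mu)$ is the set of indices of the nonzero rows of $\mu$. The parameter space is $\Theta^*_K=\{(\mu,L):\mu\in\mathbb{R}^{p\times K},\,L\in\mathcal{L}_K,\,|\mathrm{supp}(\mu)|\le s,\ \|\mu L^T\|_F^2\le C_0 sn,\ \min_{k\ne k'}\|\mu_k-\mu_{k'}\|_2\ge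 c_0\}$ for fixed constants $C_0,c_0>0$. $\mathbb{E}_*$ denotes expectation when the data are generated with parameter $(\mu^*,L^* )$. *)

theory Defs
  imports "HOL-Probability.Probability"
begin

text \<open>Matrices are represented as functions nat => nat => real with explicit
index bounds. mu is p x K (mu j k, j<p, k<K); L is n x K (L i k, i<n, k<K).\<close>

definition fitted :: "nat \<Rightarrow> (nat \<Rightarrow> nat \<Rightarrow> real) \<Rightarrow> (nat \<Rightarrow> nat \<Rightarrow> real) \<Rightarrow> nat \<Rightarrow> nat \<Rightarrow> real" where
  "fitted K mu L = (\<lambda>j i. \<Sum>k<K. mu j k * L i k)"

definition frob2 :: "nat \<Rightarrow> nat \<Rightarrow> (nat \<Rightarrow> nat \<Rightarrow> real) \<Rightarrow> real" where
  "frob2 p n A = (\<Sum>j<p. \<Sum>i<n. (A j i)\<^sup>2)"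

definition assign_mat :: "nat \<Rightarrow> nat \<Rightarrow> (nat \<Rightarrow> nat \<Rightarrow> real) \<Rightarrow> bool" where
  "assign_mat n K L \<longleftrightarrow>
     (\<forall>i<n. (\<forall>k<K. L i k = 0 \<or> L i k = 1) \<and> card {k. k < K \<and> L i k = 1} = 1)"

definition supp_rows :: "nat \<Rightarrow> nat \<Rightarrow> (nat \<Rightarrow> nat \<Rightarrow> real) \<Rightarrow> nat set" where
  "supp_rows p K mu = {j. j < p \<and> (\<exists>k<K. mu j k \<noteq> 0)}"

definition ThetaK :: "nat \<Rightarrow> nat \<Rightarrow> nat \<Rightarrow> nat \<Rightarrow> ((nat \<Rightarrow> nat \<Rightarrow> real) \<times> (nat \<Rightarrow> nat \<Rightarrow> real)) set" where
  "ThetaK n p s K = {(mu, L). assign_mat n K L \<and> card (supp_rows p K mu) \<le> s}"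

definition ThetaStar :: "real \<Rightarrow> real \<Rightarrow> nat \<Rightarrow> nat \<Rightarrow> nat \<Rightarrow> nat \<Rightarrow>
    ((nat \<Rightarrow> nat \<Rightarrow> real) \<times> (nat \<Rightarrow> nat \<Rightarrow> real)) set" where
  "ThetaStar C0 c0 n p s K = {(mu, L). (mu, L) \<in> ThetaK n p s K
      \<and> frob2 p n (fitted K mu L) \<le> C0 * real s * real n
      \<and> (\<forall>k<K. \<forall>k'<K. k \<noteq> k' \<longrightarrow> sqrt (\<Sum>j<p. (mu j k - mu j k')\<^sup>2) \<ge> c0)}"

definition noise :: "nat \<Rightarrow> nat \<Rightarrow> (nat \<times> nat \<Rightarrow> real) measure" where
  "noise p n = PiM ({..<p} \<times> {..<n}) (\<lambda>_. density lborel std_normal_density)"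

definition observe :: "nat \<Rightarrow> (nat \<Rightarrow> nat \<Rightarrow> real) \<Rightarrow> (nat \<Rightarrow> nat \<Rightarrow> real) \<Rightarrow> (nat \<times> nat \<Rightarrow> real)
    \<Rightarrow> nat \<Rightarrow> nat \<Rightarrow> real" where
  "observe K mu L E = (\<lambda>j i. fitted K mu L j i + E (j, i))"

definition is_cmle :: "nat \<Rightarrow> nat \<Rightarrow> nat \<Rightarrow> nat \<Rightarrow>
    ((nat \<Rightarrow> nat \<Rightarrow> real) \<Rightarrow> (nat \<Rightarrow> nat \<Rightarrow> real) \<times> (nat \<Rightarrow> nat \<Rightarrow> real)) \<Rightarrow> bool" where
  "is_cmle n p s K est \<longleftrightarrow> (\<forall>Y. est Y \<in> ThetaK n p s K \<and>
     (\<forall>(mu, L) \<in> ThetaK n p s K.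
        frob2 p n (\<lambda>j i. Y j i - fitted K (fst (est Y)) (snd (est Y)) j i)
          \<le> frob2 p n (\<lambda>j i. Y j i - fitted K mu L j i)))"

definition risk_loss :: "nat \<Rightarrow> nat \<Rightarrow> nat \<Rightarrow>
    ((nat \<Rightarrow> nat \<Rightarrow> real) \<Rightarrow> (nat \<Rightarrow> nat \<Rightarrow> real) \<times> (nat \<Rightarrow> nat \<Rightarrow> real)) \<Rightarrow>
    (nat \<Rightarrow> nat \<Rightarrow> real) \<Rightarrow> (nat \<Rightarrow> nat \<Rightarrow> real) \<Rightarrow> (nat \<times> nat \<Rightarrow> real) \<Rightarrow> real" where
  "risk_loss n p K est mu L E =
     (let est_val = est (observe K mu L E) in
      frob2 p n (\<lambda>j i. fitted K mu L j i - fitted K (fst est_val) (snd est_val) j i))"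

end

theory Submission
  imports Defs
begin

text \<open>Write \<open>\<theta>\<^sup>*\<close> for \<open>\<mu>\<^sup>* L\<^sup>*\<^sup>T\<close> and \<open>\<theta>\<close> for the fitted matrix of the estimator. Feasibility of
  \<open>(\<mu>\<^sup>*, L\<^sup>*)\<close> gives the basic inequality \<open>\<parallel>\<theta> - \<theta>\<^sup>*\<parallel>\<^sup>2 \<le> 2 \<langle>E, \<theta> - \<theta>\<^sup>*\<rangle>\<close>. Every \<open>\<mu> L\<^sup>T\<close> with
  \<open>(\<mu>, L) \<in> \<Theta>\<^sub>K\<close> lies in one of at most \<open>(p + 1)\<^sup>s K\<^sup>n\<close> subspaces of dimension \<open>\<le> s K\<close>, indexed by a
  row support and a labelling. Splitting \<open>\<theta> - \<theta>\<^sup>*\<close> along the subspace containing \<open>\<theta>\<close> bounds the loss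
  by the squared norm of the projected noise plus the squared noise component in one direction that
  depends only on \<open>\<theta>\<^sup>*\<close> and the subspace. A union bound through exponential moments,
  \<open>E exp (\<chi>\<^sup>2\<^sub>d / 4) = \<surd>2\<^sup>d\<close>, turns the logarithm of the number of subspaces, plus \<open>s K\<close>, into the
  risk bound; the hypothesis \<open>K log n \<lesssim> log p\<close> absorbs \<open>s K\<close> into \<open>s log p\<close>.\<close>

section \<open>Inner products on finite index sets\<close>

definition inner_on :: "'i set \<Rightarrow> ('i \<Rightarrow> real) \<Rightarrow> ('i \<Rightarrow> real) \<Rightarrow> real" where
  "inner_on I a c = (\<Sum>x\<in>I. a x * c x)"

definition proj_on :: "'i set \<Rightarrow> 'r set \<Rightarrow> ('r \<Rightarrow> 'i \<Rightarrow> real) \<Rightarrow> ('i \<Rightarrow> real) \<Rightarrow> 'i \<Rightarrow> real" where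
  "proj_on I R b z = (\<lambda>x. \<Sum>r\<in>R. inner_on I z (b r) * b r x)"

definition orthonormal_on :: "'i set \<Rightarrow> 'r set \<Rightarrow> ('r \<Rightarrow> 'i \<Rightarrow> real) \<Rightarrow> bool" where
  "orthonormal_on I R b \<longleftrightarrow>
     (\<forall>r\<in>R. \<forall>t\<in>R. inner_on I (b r) (b t) = (if r = t then 1 else 0))"

lemma inner_on_commute: "inner_on I a c = inner_on I c a"
  by (simp add: inner_on_def mult.commute)

lemma inner_on_diff_left: "inner_on I (\<lambda>x. a x - c x) e = inner_on I a e - inner_on I c e"
  unfolding inner_on_def by (simp add: sum_subtractf[symmetric] left_diff_distrib)

lemma inner_on_cong:
  "(\<And>x. x \<in> I \<Longrightarrow> a x = a' x) \<Longrightarrow> (\<And>x. x \<in> I \<Longrightarrow> c x = c' x) \<Longrightarrow> inner_on I a c = inner_on I a' c'"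
  by (simp add: inner_on_def)

lemma inner_on_self_nonneg: "inner_on I a a \<ge> 0"
  by (simp add: inner_on_def sum_nonneg)

lemma inner_on_diff_diff:
  "inner_on I (\<lambda>x. a x - c x) (\<lambda>x. a x - c x) = inner_on I a a - 2 * inner_on I a c + inner_on I c c"
proof -
  have "inner_on I (\<lambda>x. a x - c x) (\<lambda>x. a x - c x) = (\<Sum>x\<in>I. (a x * a x + c x * c x) - 2 * (a x * c x))"
    unfolding inner_on_def by (intro sum.cong refl) (simp add: algebra_simps)
  then show ?thesis
    unfolding inner_on_def by (simp add: sum_subtractf sum.distrib sum_distrib_left[symmetric])
qed

lemma cauchy_schwarz_inner_on: "(inner_on I a c)\<^sup>2 \<le> inner_on I a a * inner_on I c c"
  unfolding inner_on_def using Cauchy_Schwarz_ineq_sum[of a c I] by (simp add: power2_eq_square)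

lemma inner_on_proj_on:
  assumes "finite R"
  shows "inner_on I (proj_on I R b z) y = (\<Sum>r\<in>R. inner_on I z (b r) * inner_on I (b r) y)"
proof -
  have "inner_on I (proj_on I R b z) y = (\<Sum>x\<in>I. \<Sum>r\<in>R. inner_on I z (b r) * (b r x * y x))"
    unfolding inner_on_def proj_on_def by (simp add: sum_distrib_right mult.assoc)
  also have "\<dots> = (\<Sum>r\<in>R. inner_on I z (b r) * inner_on I (b r) y)"
    by (subst sum.swap) (simp add: inner_on_def sum_distrib_left)
  finally show ?thesis .
qed

lemma inner_on_proj_on_basis:
  assumes "finite R" "orthonormal_on I R b" "t \<in> R"
  shows "inner_on I (proj_on I R b z) (b t) = inner_on I z (b t)"
proof -
  have "inner_on I (proj_on I R b z) (b t) = (\<Sum>r\<in>R. if r = t then inner_on I z (b r) else 0)"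
    using assms unfolding inner_on_proj_on[OF assms(1)] orthonormal_on_def by (intro sum.cong) auto
  then show ?thesis using assms by (simp add: sum.delta')
qed

lemma inner_on_proj_on_self:
  assumes "finite R" "orthonormal_on I R b"
  shows "inner_on I (proj_on I R b z) (proj_on I R b z) = (\<Sum>r\<in>R. (inner_on I z (b r))\<^sup>2)"
    and "inner_on I z (proj_on I R b z) = (\<Sum>r\<in>R. (inner_on I z (b r))\<^sup>2)"
proof -
  have "inner_on I (proj_on I R b z) (proj_on I R b z)
      = (\<Sum>r\<in>R. inner_on I z (b r) * inner_on I (b r) (proj_on I R b z))"
    by (rule inner_on_proj_on[OF assms(1)])
  also have "\<dots> = (\<Sum>r\<in>R. (inner_on I z (b r))\<^sup>2)"
    using inner_on_proj_on_basis[OF assms]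
    by (intro sum.cong refl) (simp add: inner_on_commute[of I "b _"] power2_eq_square)
  finally show "inner_on I (proj_on I R b z) (proj_on I R b z) = (\<Sum>r\<in>R. (inner_on I z (b r))\<^sup>2)" .
  show "inner_on I z (proj_on I R b z) = (\<Sum>r\<in>R. (inner_on I z (b r))\<^sup>2)"
    using inner_on_proj_on[OF assms(1), of I b z z] by (simp add: inner_on_commute power2_eq_square)
qed

lemma inner_on_residual:
  assumes "finite R" "orthonormal_on I R b"
  shows "inner_on I (\<lambda>x. z x - proj_on I R b z x) (\<lambda>x. z x - proj_on I R b z x)
    = inner_on I z z - (\<Sum>r\<in>R. (inner_on I z (b r))\<^sup>2)"
  using inner_on_diff_diff[of I z "proj_on I R b z"] inner_on_proj_on_self[OF assms, of z] by simp

lemma bessel_inequality: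
  assumes "finite R" "orthonormal_on I R b"
  shows "(\<Sum>r\<in>R. (inner_on I z (b r))\<^sup>2) \<le> inner_on I z z"
  using inner_on_residual[OF assms, of z] inner_on_self_nonneg[of I "\<lambda>x. z x - proj_on I R b z x"]
  by linarith

lemma inner_on_residual_le:
  assumes "finite R" "orthonormal_on I R b"
  shows "inner_on I (\<lambda>x. z x - proj_on I R b z x) (\<lambda>x. z x - proj_on I R b z x) \<le> inner_on I z z"
  using inner_on_residual[OF assms, of z] by (simp add: sum_nonneg)

lemma inner_on_proj_on_sq_le:
  assumes "finite R" "orthonormal_on I R b"
  shows "(inner_on I e (proj_on I R b z))\<^sup>2 \<le> inner_on I z z * (\<Sum>r\<in>R. (inner_on I e (b r))\<^sup>2)"
proof -
  have "inner_on I e (proj_on I R b z) = (\<Sum>r\<in>R. inner_on I z (b r) * inner_on I e (b r))"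
    by (subst inner_on_commute) (simp add: inner_on_proj_on[OF assms(1)] inner_on_commute[of I "b _" e])
  then have "(inner_on I e (proj_on I R b z))\<^sup>2
      \<le> (\<Sum>r\<in>R. (inner_on I z (b r))\<^sup>2) * (\<Sum>r\<in>R. (inner_on I e (b r))\<^sup>2)"
    using Cauchy_Schwarz_ineq_sum[of "\<lambda>r. inner_on I z (b r)" "\<lambda>r. inner_on I e (b r)" R] by simp
  also have "\<dots> \<le> inner_on I z z * (\<Sum>r\<in>R. (inner_on I e (b r))\<^sup>2)"
    by (rule mult_right_mono[OF bessel_inequality[OF assms]]) (simp add: sum_nonneg)
  finally show ?thesis .
qed

lemma proj_on_diff: "proj_on I R b (\<lambda>x. a x - c x) x = proj_on I R b a x - proj_on I R b c x"
  unfolding proj_on_def inner_on_diff_left by (simp add: sum_subtractf left_diff_distrib)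

lemma proj_on_span:
  assumes "finite R" "orthonormal_on I R b"
    and w: "\<And>x. x \<in> I \<Longrightarrow> w x = (\<Sum>r\<in>R. c r * b r x)" and "x \<in> I"
  shows "proj_on I R b w x = w x"
proof -
  have "inner_on I w (b t) = c t" if t: "t \<in> R" for t
  proof -
    have "inner_on I w (b t) = (\<Sum>r\<in>R. c r * inner_on I (b r) (b t))"
      unfolding inner_on_def using w
      by (simp add: sum_distrib_right sum_distrib_left sum.swap[of _ I] algebra_simps)
    also have "\<dots> = (\<Sum>r\<in>R. if r = t then c r else 0)"
      using assms(2) t unfolding orthonormal_on_def by (intro sum.cong) auto
    finally show ?thesis using assms(1) t by simp
  qed
  then show ?thesis using w[OF assms(4)] unfolding proj_on_def by simp
qed

lemma sum_sq_orthonormal_combination: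
  assumes "finite I" "finite R" "orthonormal_on I R b"
  shows "(\<Sum>x\<in>I. (\<Sum>r\<in>R. c r * b r x)\<^sup>2) = (\<Sum>r\<in>R. (c r)\<^sup>2)"
proof -
  have "(\<Sum>x\<in>I. (\<Sum>r\<in>R. c r * b r x)\<^sup>2) = (\<Sum>r\<in>R. \<Sum>t\<in>R. c r * c t * inner_on I (b r) (b t))"
    unfolding inner_on_def
    by (simp add: power2_eq_square sum_product sum_distrib_left sum.swap[of _ I] algebra_simps)
  also have "\<dots> = (\<Sum>r\<in>R. \<Sum>t\<in>R. if t = r then c r * c t else 0)"
    using assms(3) unfolding orthonormal_on_def by (intro sum.cong refl) auto
  finally show ?thesis using assms(2) by (simp add: power2_eq_square)
qed

lemma self_bounded_le:
  fixes D a b q1 q2 :: real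
  assumes "D \<le> 2 * (a + b)" "a\<^sup>2 \<le> D * q1" "b\<^sup>2 \<le> D * q2" "q1 \<ge> 0" "q2 \<ge> 0"
  shows "D \<le> 8 * (q1 + q2)"
proof (cases "D > 0")
  case True
  have "D\<^sup>2 \<le> (2 * (a + b))\<^sup>2" using assms(1) True by (intro power_mono) auto
  also have "\<dots> \<le> 8 * (a\<^sup>2 + b\<^sup>2)"
    using sum_squares_ge_zero[of "a - b" 0] by (simp add: power2_eq_square algebra_simps)
  also have "\<dots> \<le> D * (8 * (q1 + q2))" using assms(2,3) by (simp add: algebra_simps)
  finally show ?thesis using True by (simp add: power2_eq_square)
next
  case False
  then show ?thesis using assms(4,5) by simp
qed

lemma least_squares_error_bound:
  fixes X ts th :: "'i \<Rightarrow> real"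
  assumes fR: "finite R" and orth: "orthonormal_on I R b"
    and span: "\<And>x. x \<in> I \<Longrightarrow> proj_on I R b th x = th x"
    and fit: "inner_on I (\<lambda>x. X x + ts x - th x) (\<lambda>x. X x + ts x - th x) \<le> inner_on I X X"
  defines "u \<equiv> \<lambda>x. ts x - proj_on I R b ts x"
  shows "inner_on I (\<lambda>x. th x - ts x) (\<lambda>x. th x - ts x)
     \<le> 8 * ((\<Sum>r\<in>R. (inner_on I X (b r))\<^sup>2) + (inner_on I X u)\<^sup>2 / inner_on I u u)"
proof -
  define d where "d = (\<lambda>x. th x - ts x)"
  define D where "D = inner_on I d d"
  define pd where "pd = proj_on I R b d"
  have pd_eq: "d x - pd x = - u x" if "x \<in> I" for x
    unfolding pd_def d_def u_def using span[OF that] by (simp add: proj_on_diff)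
  have basic: "D \<le> 2 * inner_on I X d"
  proof -
    have "inner_on I (\<lambda>x. X x - d x) (\<lambda>x. X x - d x) \<le> inner_on I X X"
      using fit unfolding d_def by (simp add: algebra_simps)
    then show ?thesis unfolding inner_on_diff_diff D_def by simp
  qed
  \<comment> \<open>\<open>d\<close> is its projection \<open>pd\<close> onto the model subspace minus the residual \<open>u\<close> of the
      truth, which does not depend on \<open>X\<close>.\<close>
  have split: "inner_on I X d = inner_on I X pd + - inner_on I X u"
  proof -
    have "inner_on I X d = inner_on I X (\<lambda>x. pd x - u x)"
      using pd_eq by (intro inner_on_cong) (auto simp: algebra_simps)
    then show ?thesis by (simp add: inner_on_commute[of I X] inner_on_diff_left)
  qed
  have pd_bound: "(inner_on I X pd)\<^sup>2 \<le> D * (\<Sum>r\<in>R. (inner_on I X (b r))\<^sup>2)"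
    unfolding pd_def D_def by (rule inner_on_proj_on_sq_le[OF fR orth])
  have uu: "inner_on I u u \<le> D"
  proof -
    have "inner_on I u u = inner_on I (\<lambda>x. d x - pd x) (\<lambda>x. d x - pd x)"
      unfolding inner_on_def by (intro sum.cong refl) (simp add: pd_eq)
    also have "\<dots> \<le> D" unfolding D_def pd_def by (rule inner_on_residual_le[OF fR orth])
    finally show ?thesis .
  qed
  have u_bound: "(- inner_on I X u)\<^sup>2 \<le> D * ((inner_on I X u)\<^sup>2 / inner_on I u u)"
  proof (cases "inner_on I u u = 0")
    case True
    then show ?thesis using cauchy_schwarz_inner_on[of I X u] by simp
  next
    case False
    then have pos: "inner_on I u u > 0" using inner_on_self_nonneg[of I u] by linarith
    then have "(inner_on I X u)\<^sup>2 = inner_on I u u * ((inner_on I X u)\<^sup>2 / inner_on I u u)"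
      by simp
    also have "\<dots> \<le> D * ((inner_on I X u)\<^sup>2 / inner_on I u u)"
      using uu pos by (intro mult_right_mono) auto
    finally show ?thesis by simp
  qed
  have "D \<le> 8 * ((\<Sum>r\<in>R. (inner_on I X (b r))\<^sup>2) + (inner_on I X u)\<^sup>2 / inner_on I u u)"
    using basic split
    by (intro self_bounded_le[OF _ pd_bound u_bound])
      (auto intro: sum_nonneg divide_nonneg_nonneg inner_on_self_nonneg)
  then show ?thesis unfolding D_def d_def .
qed

section \<open>Exponential moments of Gaussian vectors\<close>

abbreviation std_gaussian :: "real measure" where
  "std_gaussian \<equiv> density lborel std_normal_density"

abbreviation gaussian_on :: "'i set \<Rightarrow> ('i \<Rightarrow> real) measure" where
  "gaussian_on I \<equiv> PiM I (\<lambda>_. std_gaussian)"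

lemma prob_space_std_gaussian: "prob_space std_gaussian"
  using prob_space_normal_density by simp

lemma prob_space_gaussian_on: "prob_space (gaussian_on I)"
  by (intro prob_space_PiM prob_space_std_gaussian)

interpretation std_gaussian_product: product_sigma_finite "\<lambda>_::'i. std_gaussian"
  unfolding product_sigma_finite_def
  using prob_space_std_gaussian prob_space_imp_sigma_finite by blast

lemma nn_integral_normal_density: "\<sigma> > 0 \<Longrightarrow> (\<integral>\<^sup>+x. ennreal (normal_density m \<sigma> x) \<partial>lborel) = 1"
  by (subst nn_integral_eq_integral)
    (auto intro: normal_density_nonneg integrable_normal_density integral_normal_density)

lemma nn_integral_exp_linear_std_gaussian:
  "(\<integral>\<^sup>+x. ennreal (exp (t * x)) \<partial>std_gaussian) = ennreal (exp (t\<^sup>2 / 2))"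
proof -
  have dens: "std_normal_density x * exp (t * x) = exp (t\<^sup>2 / 2) * normal_density t 1 x" for x
  proof -
    have "exp (- x\<^sup>2 / 2) * exp (t * x) = exp (t\<^sup>2 / 2) * exp (- (x - t)\<^sup>2 / 2)"
      by (simp add: exp_add[symmetric] power2_eq_square algebra_simps diff_divide_distrib add_divide_distrib)
    then show ?thesis unfolding std_normal_density_def normal_density_def by simp
  qed
  have "(\<integral>\<^sup>+x. ennreal (exp (t * x)) \<partial>std_gaussian)
      = (\<integral>\<^sup>+x. ennreal (exp (t\<^sup>2 / 2)) * ennreal (normal_density t 1 x) \<partial>lborel)"
    by (simp add: nn_integral_density dens ennreal_mult[symmetric] del: ennreal_mult')
  also have "\<dots> = ennreal (exp (t\<^sup>2 / 2))"
    by (subst nn_integral_cmult) (auto simp: nn_integral_normal_density)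
  finally show ?thesis .
qed

lemma nn_integral_exp_sq_std_gaussian:
  "(\<integral>\<^sup>+x. ennreal (exp (x\<^sup>2 / 4)) \<partial>std_gaussian) = ennreal (sqrt 2)"
proof -
  have dens: "std_normal_density x * exp (x\<^sup>2 / 4) = sqrt 2 * normal_density 0 (sqrt 2) x" for x
  proof -
    have "exp (- x\<^sup>2 / 2) * exp (x\<^sup>2 / 4) = exp (- x\<^sup>2 / 4)"
      by (simp add: exp_add[symmetric])
    moreover have "sqrt (2 * pi * 2) = sqrt 2 * sqrt (2 * pi)"
      by (simp add: real_sqrt_mult)
    ultimately show ?thesis unfolding std_normal_density_def normal_density_def
      by (simp add: field_simps)
  qed
  have "(\<integral>\<^sup>+x. ennreal (exp (x\<^sup>2 / 4)) \<partial>std_gaussian)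
      = (\<integral>\<^sup>+x. ennreal (sqrt 2) * ennreal (normal_density 0 (sqrt 2) x) \<partial>lborel)"
    by (simp add: nn_integral_density dens ennreal_mult[symmetric] del: ennreal_mult')
  also have "\<dots> = ennreal (sqrt 2)"
    by (subst nn_integral_cmult) (auto simp: nn_integral_normal_density)
  finally show ?thesis .
qed

lemma nn_integral_exp_linear_gaussian_on:
  assumes "finite I"
  shows "(\<integral>\<^sup>+X. ennreal (exp (\<Sum>x\<in>I. a x * X x)) \<partial>gaussian_on I)
    = ennreal (exp ((\<Sum>x\<in>I. (a x)\<^sup>2) / 2))"
proof -
  have "(\<integral>\<^sup>+X. ennreal (exp (\<Sum>x\<in>I. a x * X x)) \<partial>gaussian_on I)
      = (\<integral>\<^sup>+X. (\<Prod>x\<in>I. ennreal (exp (a x * X x))) \<partial>gaussian_on I)"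
    by (simp add: exp_sum[OF assms] prod_ennreal)
  also have "\<dots> = (\<Prod>x\<in>I. \<integral>\<^sup>+y. ennreal (exp (a x * y)) \<partial>std_gaussian)"
    by (rule std_gaussian_product.product_nn_integral_prod[OF assms]) simp
  also have "\<dots> = ennreal (exp ((\<Sum>x\<in>I. (a x)\<^sup>2) / 2))"
    by (simp add: nn_integral_exp_linear_std_gaussian prod_ennreal exp_sum[OF assms] sum_divide_distrib)
  finally show ?thesis .
qed

lemma nn_integral_exp_sum_sq_gaussian_on:
  assumes "finite R"
  shows "(\<integral>\<^sup>+g. ennreal (exp ((\<Sum>r\<in>R. (g r)\<^sup>2) / 4)) \<partial>gaussian_on R) = ennreal (sqrt 2 ^ card R)"
proof -
  have "(\<integral>\<^sup>+g. ennreal (exp ((\<Sum>r\<in>R. (g r)\<^sup>2) / 4)) \<partial>gaussian_on R)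
      = (\<integral>\<^sup>+g. (\<Prod>r\<in>R. ennreal (exp ((g r)\<^sup>2 / 4))) \<partial>gaussian_on R)"
    by (simp add: exp_sum[OF assms] prod_ennreal sum_divide_distrib)
  also have "\<dots> = (\<Prod>r\<in>R. \<integral>\<^sup>+y. ennreal (exp (y\<^sup>2 / 4)) \<partial>std_gaussian)"
    by (rule std_gaussian_product.product_nn_integral_prod[OF assms]) simp
  also have "\<dots> = ennreal (sqrt 2 ^ card R)"
    by (simp add: nn_integral_exp_sq_std_gaussian ennreal_power)
  finally show ?thesis .
qed

text \<open>The squares are linearised with an auxiliary standard Gaussian vector \<open>g\<close> indexed by \<open>R\<close>,
  \<open>exp (|y|\<^sup>2 / 4) = E exp (\<langle>y / \<surd>2, g\<rangle>)\<close>; after swapping the integrals, orthonormality turns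
  the inner Gaussian integral over \<open>X\<close> back into \<open>exp (|g|\<^sup>2 / 4)\<close>.\<close>

lemma nn_integral_exp_proj_sq_gaussian_on:
  fixes b :: "'r \<Rightarrow> 'i \<Rightarrow> real"
  assumes fI: "finite I" and fR: "finite R" and orth: "orthonormal_on I R b"
  shows "(\<integral>\<^sup>+X. ennreal (exp ((\<Sum>r\<in>R. (inner_on I (b r) X)\<^sup>2) / 4)) \<partial>gaussian_on I)
    = ennreal (sqrt 2 ^ card R)"
proof -
  interpret P: pair_sigma_finite "gaussian_on I" "gaussian_on R"
    by (intro pair_sigma_finite.intro prob_space_imp_sigma_finite prob_space_gaussian_on)
  define f where "f = (\<lambda>(X::'i \<Rightarrow> real, g::'r \<Rightarrow> real).
    ennreal (exp (\<Sum>r\<in>R. (inner_on I (b r) X / sqrt 2) * g r)))"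
  have f_meas: "f \<in> borel_measurable (gaussian_on I \<Otimes>\<^sub>M gaussian_on R)"
    unfolding f_def inner_on_def by measurable
  have linearise: "ennreal (exp ((\<Sum>r\<in>R. (y r)\<^sup>2) / 4))
      = (\<integral>\<^sup>+g. ennreal (exp (\<Sum>r\<in>R. (y r / sqrt 2) * g r)) \<partial>gaussian_on R)" for y :: "'r \<Rightarrow> real"
    using nn_integral_exp_linear_gaussian_on[OF fR, of "\<lambda>r. y r / sqrt 2"]
    by (simp add: power_divide sum_divide_distrib[symmetric])
  have inner: "(\<integral>\<^sup>+X. f (X, g) \<partial>gaussian_on I) = ennreal (exp ((\<Sum>r\<in>R. (g r)\<^sup>2) / 4))" for g
  proof -
    have "(\<integral>\<^sup>+X. f (X, g) \<partial>gaussian_on I)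
        = (\<integral>\<^sup>+X. ennreal (exp (\<Sum>x\<in>I. (\<Sum>r\<in>R. (g r / sqrt 2) * b r x) * X x)) \<partial>gaussian_on I)"
      unfolding f_def inner_on_def
      by (simp add: sum_distrib_left sum_distrib_right sum_divide_distrib sum.swap[of _ R] algebra_simps)
    also have "\<dots> = ennreal (exp ((\<Sum>x\<in>I. (\<Sum>r\<in>R. (g r / sqrt 2) * b r x)\<^sup>2) / 2))"
      by (rule nn_integral_exp_linear_gaussian_on[OF fI])
    also have "\<dots> = ennreal (exp ((\<Sum>r\<in>R. (g r)\<^sup>2) / 4))"
      by (simp add: sum_sq_orthonormal_combination[OF fI fR orth] power_divide
          sum_divide_distrib[symmetric])
    finally show ?thesis .
  qed
  have "(\<integral>\<^sup>+X. ennreal (exp ((\<Sum>r\<in>R. (inner_on I (b r) X)\<^sup>2) / 4)) \<partial>gaussian_on I)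
      = (\<integral>\<^sup>+X. (\<integral>\<^sup>+g. f (X, g) \<partial>gaussian_on R) \<partial>gaussian_on I)"
    by (simp add: linearise f_def)
  also have "\<dots> = (\<integral>\<^sup>+g. (\<integral>\<^sup>+X. f (X, g) \<partial>gaussian_on I) \<partial>gaussian_on R)"
    by (rule P.Fubini[OF f_meas, symmetric])
  also have "\<dots> = ennreal (sqrt 2 ^ card R)"
    by (simp add: inner nn_integral_exp_sum_sq_gaussian_on[OF fR])
  finally show ?thesis .
qed

lemma nn_integral_exp_normalized_sq_gaussian_on:
  assumes fI: "finite I"
  shows "(\<integral>\<^sup>+X. ennreal (exp ((inner_on I u X)\<^sup>2 / inner_on I u u / 4)) \<partial>gaussian_on I)
    \<le> ennreal (sqrt 2)"
proof (cases "inner_on I u u = 0")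
  case True
  interpret prob_space "gaussian_on I" by (rule prob_space_gaussian_on)
  show ?thesis using True by (simp add: emeasure_space_1)
next
  case False
  then have pos: "inner_on I u u > 0" using inner_on_self_nonneg[of I u] by linarith
  define b where "b = (\<lambda>(_::unit) x. u x / sqrt (inner_on I u u))"
  have "inner_on I (b ()) (b ()) = 1"
    using pos unfolding b_def inner_on_def by (simp add: sum_divide_distrib[symmetric] power2_eq_square)
  then have orth: "orthonormal_on I {()} b" unfolding orthonormal_on_def by simp
  have "(inner_on I (b ()) X)\<^sup>2 = (inner_on I u X)\<^sup>2 / inner_on I u u" for X
    using pos unfolding b_def inner_on_def by (simp add: sum_divide_distrib[symmetric] power_divide)
  then show ?thesis
    using nn_integral_exp_proj_sq_gaussian_on[OF fI _ orth] by simp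
qed

lemma borel_measurable_inner_on_gaussian_on:
  "(\<lambda>X. inner_on I a X) \<in> borel_measurable (gaussian_on I)"
  unfolding inner_on_def by measurable

section \<open>Least squares over a finite union of subspaces\<close>

lemma le_ln_add_exp_div:
  fixes y c :: real
  assumes "c > 0"
  shows "y \<le> ln c + exp y / c"
  using ln_le_minus_one[of "exp y / c"] assms by (simp add: ln_div)

text \<open>Pointwise, \<open>max\<^sub>a Q a\<close> is bounded by the soft maximum \<open>(ln c + \<Sum>\<^sub>a exp (t Q a) / c) / t\<close>
  with \<open>c = card A * B\<close>.\<close>

lemma nn_integral_le_of_exp_moments:
  fixes Q :: "'a \<Rightarrow> 'b \<Rightarrow> real" and F :: "'b \<Rightarrow> real"
  assumes "prob_space M" and fA: "finite A" and "A \<noteq> {}" and B: "B \<ge> 1" and t: "t > 0"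
    and Q_meas: "\<And>a. a \<in> A \<Longrightarrow> Q a \<in> borel_measurable M"
    and Q_exp: "\<And>a. a \<in> A \<Longrightarrow> (\<integral>\<^sup>+X. ennreal (exp (t * Q a X)) \<partial>M) \<le> ennreal B"
    and F_le: "\<And>X. X \<in> space M \<Longrightarrow> \<exists>a\<in>A. F X \<le> Q a X"
  shows "(\<integral>\<^sup>+X. ennreal (F X) \<partial>M) \<le> ennreal ((ln (real (card A) * B) + 1) / t)"
proof -
  interpret prob_space M by fact
  define c where "c = real (card A) * B"
  have card: "real (card A) \<ge> 1" using fA \<open>A \<noteq> {}\<close> by (simp add: Suc_leI card_gt_0_iff)
  then have c: "c \<ge> 1" using B mult_mono[of 1 "real (card A)" 1 B] unfolding c_def by simp
  then have lnc: "ln c / t \<ge> 0" using t by simp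
  have pointwise: "ennreal (F X) \<le> ennreal (ln c / t)
      + (\<Sum>a\<in>A. ennreal (1 / (c * t)) * ennreal (exp (t * Q a X)))" if X: "X \<in> space M" for X
  proof -
    obtain a where a: "a \<in> A" "F X \<le> Q a X" using F_le[OF X] by blast
    have "t * Q a X \<le> ln c + exp (t * Q a X) / c" using c by (intro le_ln_add_exp_div) simp
    moreover have "t * F X \<le> t * Q a X" using a(2) t by simp
    ultimately have "t * F X \<le> ln c + exp (t * Q a X) / c" by linarith
    then have "F X \<le> ln c / t + exp (t * Q a X) / (c * t)"
      using t by (simp add: field_simps)
    also have "exp (t * Q a X) / (c * t) \<le> (\<Sum>a\<in>A. exp (t * Q a X) / (c * t))"
      using a fA c t by (intro member_le_sum) auto
    finally show ?thesis
      using lnc c t by (simp add: ennreal_plus[symmetric] ennreal_mult[symmetric] sum_nonneg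
          del: ennreal_plus)
  qed
  have "(\<integral>\<^sup>+X. ennreal (F X) \<partial>M) \<le> (\<integral>\<^sup>+X. ennreal (ln c / t)
      + (\<Sum>a\<in>A. ennreal (1 / (c * t)) * ennreal (exp (t * Q a X))) \<partial>M)"
    by (intro nn_integral_mono pointwise)
  also have "\<dots> = ennreal (ln c / t)
      + (\<Sum>a\<in>A. ennreal (1 / (c * t)) * (\<integral>\<^sup>+X. ennreal (exp (t * Q a X)) \<partial>M))"
    using Q_meas by (simp add: nn_integral_add nn_integral_sum nn_integral_cmult emeasure_space_1)
  also have "\<dots> \<le> ennreal (ln c / t) + (\<Sum>a\<in>A. ennreal (1 / (c * t)) * ennreal B)"
    using Q_exp by (intro add_left_mono sum_mono mult_left_mono) auto
  also have "(\<Sum>a\<in>A. ennreal (1 / (c * t)) * ennreal B) = ennreal (\<Sum>a\<in>A. B / (c * t))"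
    using c t B by (subst sum_ennreal[symmetric]) (auto simp: ennreal_mult[symmetric])
  also have "(\<Sum>a\<in>A. B / (c * t)) = 1 / t"
    using card t B unfolding c_def by simp
  also have "ennreal (ln c / t) + ennreal (1 / t) = ennreal ((ln c + 1) / t)"
    using lnc t by (simp add: ennreal_plus[symmetric] add_divide_distrib del: ennreal_plus)
  finally show ?thesis unfolding c_def .
qed

text \<open>Two statistics per subspace, each with exponential moment at most \<open>\<surd>2\<^sup>d\<close>: the squared norm
  of the projected noise, and the squared noise component along the normalised residual of \<open>ts\<close>.\<close>

lemma least_squares_union_of_subspaces_risk:
  fixes fit :: "('i \<Rightarrow> real) \<Rightarrow> 'i \<Rightarrow> real" and ts :: "'i \<Rightarrow> real"
    and M :: "'m set" and R :: "'m \<Rightarrow> 'r set" and b :: "'m \<Rightarrow> 'r \<Rightarrow> 'i \<Rightarrow> real"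
  assumes fI: "finite I" and fM: "finite M" and neM: "M \<noteq> {}" and d: "d > 0"
    and models: "\<And>m. m \<in> M \<Longrightarrow> finite (R m) \<and> orthonormal_on I (R m) (b m) \<and> card (R m) \<le> d"
    and in_model: "\<And>X. \<exists>m\<in>M. \<forall>x\<in>I. proj_on I (R m) (b m) (fit X) x = fit X x"
    and fit: "\<And>X. inner_on I (\<lambda>x. X x + ts x - fit X x) (\<lambda>x. X x + ts x - fit X x) \<le> inner_on I X X"
  shows "(\<integral>\<^sup>+X. ennreal (inner_on I (\<lambda>x. fit X x - ts x) (\<lambda>x. fit X x - ts x)) \<partial>gaussian_on I)
    \<le> ennreal (64 * (ln (2 * real (card M) * sqrt 2 ^ d) + 1))"
proof -
  define u where "u = (\<lambda>m x. ts x - proj_on I (R m) (b m) ts x)"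
  define Q where "Q = (\<lambda>(m, in_span) X. 16 * (if in_span then \<Sum>r\<in>R m. (inner_on I (b m r) X)\<^sup>2
    else (inner_on I (u m) X)\<^sup>2 / inner_on I (u m) (u m)))"
  define A where "A = M \<times> (UNIV :: bool set)"
  have B: "sqrt 2 ^ d \<ge> (1::real)" by (simp add: one_le_power)
  have sq_meas: "(\<lambda>X. (inner_on I c X)\<^sup>2) \<in> borel_measurable (gaussian_on I)" for c
    by (intro borel_measurable_power borel_measurable_inner_on_gaussian_on)
  have Q_meas: "Q a \<in> borel_measurable (gaussian_on I)" for a
    unfolding Q_def using sq_meas by (cases a) (auto split: if_splits)
  have Q_exp: "(\<integral>\<^sup>+X. ennreal (exp (1 / 64 * Q a X)) \<partial>gaussian_on I) \<le> ennreal (sqrt 2 ^ d)"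
    if a: "a \<in> A" for a
  proof -
    obtain m in_span where a: "a = (m, in_span)" "m \<in> M" using a unfolding A_def by blast
    have m: "finite (R m)" "orthonormal_on I (R m) (b m)" "card (R m) \<le> d" using models[OF a(2)] by auto
    show ?thesis
    proof (cases in_span)
      case True
      have "(\<integral>\<^sup>+X. ennreal (exp (1 / 64 * Q a X)) \<partial>gaussian_on I) = ennreal (sqrt 2 ^ card (R m))"
        using nn_integral_exp_proj_sq_gaussian_on[OF fI m(1,2)] True by (simp add: Q_def a)
      also have "\<dots> \<le> ennreal (sqrt 2 ^ d)" using m(3) by (intro ennreal_leI power_increasing) auto
      finally show ?thesis .
    next
      case False
      have "(\<integral>\<^sup>+X. ennreal (exp (1 / 64 * Q a X)) \<partial>gaussian_on I) \<le> ennreal (sqrt 2)"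
        using nn_integral_exp_normalized_sq_gaussian_on[OF fI, of "u m"] False by (simp add: Q_def a mult.commute)
      also have "\<dots> \<le> ennreal (sqrt 2 ^ d)"
        using power_increasing[of 1 d "sqrt 2"] d by (intro ennreal_leI) auto
      finally show ?thesis .
    qed
  qed
  have loss_le: "\<exists>a\<in>A. inner_on I (\<lambda>x. fit X x - ts x) (\<lambda>x. fit X x - ts x) \<le> Q a X" for X
  proof -
    obtain m where m: "m \<in> M" "\<forall>x\<in>I. proj_on I (R m) (b m) (fit X) x = fit X x"
      using in_model by blast
    have "inner_on I (\<lambda>x. fit X x - ts x) (\<lambda>x. fit X x - ts x)
      \<le> 8 * ((\<Sum>r\<in>R m. (inner_on I X (b m r))\<^sup>2) + (inner_on I X (u m))\<^sup>2 / inner_on I (u m) (u m))"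
      unfolding u_def using models[OF m(1)] m(2) fit by (intro least_squares_error_bound) auto
    also have "\<dots> \<le> max (Q (m, True) X) (Q (m, False) X)"
      by (simp add: Q_def inner_on_commute[of I X])
    finally show ?thesis using m(1) unfolding A_def by (auto simp: max_def split: if_splits)
  qed
  have "(\<integral>\<^sup>+X. ennreal (inner_on I (\<lambda>x. fit X x - ts x) (\<lambda>x. fit X x - ts x)) \<partial>gaussian_on I)
      \<le> ennreal ((ln (real (card A) * sqrt 2 ^ d) + 1) / (1 / 64))"
    using fM neM unfolding A_def[symmetric]
    by (intro nn_integral_le_of_exp_moments[OF prob_space_gaussian_on _ _ B _ Q_meas Q_exp loss_le])
      (auto simp: A_def)
  also have "real (card A) = 2 * real (card M)" unfolding A_def by (simp add: card_cartesian_product)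
  finally show ?thesis by (simp add: mult.commute)
qed

section \<open>Clustering models\<close>

definition cluster_of :: "nat \<Rightarrow> (nat \<Rightarrow> nat \<Rightarrow> real) \<Rightarrow> nat \<Rightarrow> nat" where
  "cluster_of K L i = (THE k. k < K \<and> L i k = 1)"

lemma assign_mat_cluster_of:
  assumes "assign_mat n K L" "i < n"
  shows "cluster_of K L i < K"
    and "\<And>k. k < K \<Longrightarrow> L i k = (if k = cluster_of K L i then 1 else 0)"
proof -
  have one: "card {k. k < K \<and> L i k = 1} = 1" and bin: "\<And>k. k < K \<Longrightarrow> L i k = 0 \<or> L i k = 1"
    using assms unfolding assign_mat_def by blast+
  from one obtain k0 where k0: "{k. k < K \<and> L i k = 1} = {k0}" by (rule card_1_singletonE)
  then have "cluster_of K L i = k0" unfolding cluster_of_def by (intro the_equality) auto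
  then show "cluster_of K L i < K" "\<And>k. k < K \<Longrightarrow> L i k = (if k = cluster_of K L i then 1 else 0)"
    using k0 bin by (auto simp: set_eq_iff)
qed

lemma fitted_assign_mat:
  assumes "assign_mat n K L" "i < n"
  shows "fitted K mu L j i = mu j (cluster_of K L i)"
proof -
  have "fitted K mu L j i = (\<Sum>k<K. if k = cluster_of K L i then mu j k else 0)"
    unfolding fitted_def by (intro sum.cong refl) (simp add: assign_mat_cluster_of(2)[OF assms])
  then show ?thesis using assign_mat_cluster_of(1)[OF assms] by simp
qed

definition flat :: "(nat \<Rightarrow> nat \<Rightarrow> real) \<Rightarrow> nat \<times> nat \<Rightarrow> real" where
  "flat A = (\<lambda>(j, i). A j i)"

lemma frob2_eq_inner_on: "frob2 p n A = inner_on ({..<p} \<times> {..<n}) (flat A) (flat A)"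
  unfolding frob2_def inner_on_def flat_def
  by (simp add: sum.cartesian_product power2_eq_square case_prod_beta)

definition cluster :: "nat \<Rightarrow> (nat \<Rightarrow> nat) \<Rightarrow> nat \<Rightarrow> nat set" where
  "cluster n h k = {i. i < n \<and> h i = k}"

text \<open>\<open>cluster_basis n h (j, k)\<close> is the matrix \<open>e\<^sub>j 1\<^sub>G\<^sup>T\<close>, \<open>G = cluster n h k\<close>, scaled to unit norm.\<close>

definition cluster_basis :: "nat \<Rightarrow> (nat \<Rightarrow> nat) \<Rightarrow> nat \<times> nat \<Rightarrow> nat \<times> nat \<Rightarrow> real" where
  "cluster_basis n h = (\<lambda>(j, k) (j', i).
     if j' = j \<and> i \<in> cluster n h k then 1 / sqrt (real (card (cluster n h k))) else 0)"

lemma card_cluster_pos: "i < n \<Longrightarrow> card (cluster n h (h i)) > 0"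
  unfolding cluster_def by (auto simp: card_gt_0_iff)

lemma orthonormal_on_cluster_basis:
  assumes "T \<subseteq> {..<p}"
  shows "orthonormal_on ({..<p} \<times> {..<n}) (T \<times> h ` {..<n}) (cluster_basis n h)"
  unfolding orthonormal_on_def
proof (intro ballI)
  let ?I = "{..<p} \<times> {..<n}"
  fix r t assume r: "r \<in> T \<times> h ` {..<n}" and t: "t \<in> T \<times> h ` {..<n}"
  obtain j i where ji: "r = (j, h i)" "j \<in> T" "i < n" using r by auto
  define G where "G = cluster n h (h i)"
  have G: "card G > 0" "{j} \<times> G \<subseteq> ?I" using card_cluster_pos[OF ji(3)] assms ji(2)
    unfolding G_def cluster_def by auto
  show "inner_on ?I (cluster_basis n h r) (cluster_basis n h t) = (if r = t then 1 else 0)"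
  proof (cases "r = t")
    case True
    have "inner_on ?I (cluster_basis n h r) (cluster_basis n h t)
        = (\<Sum>x\<in>?I. if x \<in> {j} \<times> G then 1 / real (card G) else 0)"
      unfolding inner_on_def True[symmetric] ji(1) cluster_basis_def G_def
      by (intro sum.cong refl) (auto simp: real_sqrt_mult[symmetric] split: if_splits)
    also have "\<dots> = 1"
      using G by (simp add: sum.If_cases Int_absorb1 card_cartesian_product)
    finally show ?thesis using True by simp
  next
    case False
    have zero: "cluster_basis n h r x * cluster_basis n h t x = 0" for x
    proof -
      obtain j' k where t: "t = (j', k)" by (cases t)
      obtain a c where x: "x = (a, c)" by (cases x)
      have "\<not> (a = j \<and> c \<in> cluster n h (h i) \<and> a = j' \<and> c \<in> cluster n h k)"
        using False unfolding ji(1) t cluster_def by auto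
      then show ?thesis unfolding x ji(1) t cluster_basis_def by auto
    qed
    have "inner_on ?I (cluster_basis n h r) (cluster_basis n h t) = (\<Sum>x\<in>?I. 0)"
      unfolding inner_on_def by (intro sum.cong refl zero)
    then show ?thesis using False by simp
  qed
qed

lemma proj_on_cluster_basis_fitted:
  assumes am: "assign_mat n K L" and h: "\<And>i. i < n \<Longrightarrow> h i = cluster_of K L i"
    and x: "x \<in> {..<p} \<times> {..<n}"
  shows "proj_on ({..<p} \<times> {..<n}) (supp_rows p K mu \<times> h ` {..<n}) (cluster_basis n h)
      (flat (fitted K mu L)) x = flat (fitted K mu L) x"
proof (rule proj_on_span)
  let ?R = "supp_rows p K mu \<times> h ` {..<n}"
  show "finite ?R" unfolding supp_rows_def by simp
  show "orthonormal_on ({..<p} \<times> {..<n}) ?R (cluster_basis n h)"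
    by (rule orthonormal_on_cluster_basis) (auto simp: supp_rows_def)
  fix y assume "y \<in> {..<p} \<times> {..<n}"
  then obtain j i where y: "y = (j, i)" "j < p" "i < n" by auto
  have hK: "h i < K" using assign_mat_cluster_of(1)[OF am y(3)] h[OF y(3)] by simp
  have mem: "i \<in> cluster n h k \<longleftrightarrow> h i = k" for k using y(3) by (auto simp: cluster_def)
  have summand: "mu (fst r) (snd r) * sqrt (real (card (cluster n h (snd r)))) * cluster_basis n h r y
      = (if r = (j, h i) then mu j (h i) else 0)" for r
  proof (cases r)
    case (Pair a k)
    then show ?thesis using card_cluster_pos[OF y(3), of h]
      by (auto simp: y cluster_basis_def mem)
  qed
  have "(\<Sum>r\<in>?R. mu (fst r) (snd r) * sqrt (real (card (cluster n h (snd r)))) * cluster_basis n h r y)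
      = (\<Sum>r\<in>?R. if r = (j, h i) then mu j (h i) else 0)"
    by (intro sum.cong refl summand)
  also have "\<dots> = mu j (h i)"
    using y hK by (auto simp: supp_rows_def)
  finally show "flat (fitted K mu L) y = (\<Sum>r\<in>?R. mu (fst r) (snd r)
      * sqrt (real (card (cluster n h (snd r)))) * cluster_basis n h r y)"
    using fitted_assign_mat[OF am y(3)] h[OF y(3)] by (simp add: flat_def y)
qed (fact x)

lemma card_subsets_card_le: "card {T. T \<subseteq> {..<p} \<and> card T \<le> s} \<le> Suc p ^ s"
proof -
  have "{T. T \<subseteq> {..<p} \<and> card T \<le> s} = (\<Union>k\<le>s. {T. T \<subseteq> {..<p} \<and> card T = k})" by auto
  then have "card {T. T \<subseteq> {..<p} \<and> card T \<le> s} \<le> (\<Sum>k\<le>s. card {T. T \<subseteq> {..<p} \<and> card T = k})"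
    using card_UN_le[of "{..s}" "\<lambda>k. {T. T \<subseteq> {..<p} \<and> card T = k}"] by simp
  also have "\<dots> = (\<Sum>k\<le>s. p choose k)" by (simp add: n_subsets)
  also have "\<dots> \<le> (\<Sum>k\<le>s. (s choose k) * p ^ k * 1 ^ (s - k))"
  proof (rule sum_mono)
    fix k assume "k \<in> {..s}"
    then have "p ^ k \<le> (s choose k) * p ^ k" by (simp add: Suc_leI)
    moreover have "p choose k \<le> p ^ k" by (cases "k \<le> p") (auto simp: binomial_le_pow binomial_eq_0)
    ultimately show "p choose k \<le> (s choose k) * p ^ k * 1 ^ (s - k)"
      using order_trans by (simp only: power_one mult_1_right)
  qed
  also have "\<dots> = Suc p ^ s" using binomial[of p 1 s] by simp
  finally show ?thesis .
qed

definition cluster_models :: "nat \<Rightarrow> nat \<Rightarrow> nat \<Rightarrow> nat \<Rightarrow> (nat set \<times> (nat \<Rightarrow> nat)) set" where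
  "cluster_models n p s K = {T. T \<subseteq> {..<p} \<and> card T \<le> s} \<times> ({..<n} \<rightarrow>\<^sub>E {..<K})"

lemma finite_cluster_models: "finite (cluster_models n p s K)"
  unfolding cluster_models_def by (auto intro: finite_PiE finite_subset[of _ "Pow {..<p}"])

lemma cluster_models_nonempty:
  assumes "K > 0"
  shows "cluster_models n p s K \<noteq> {}"
proof -
  have "({}, \<lambda>i\<in>{..<n}. 0) \<in> cluster_models n p s K"
    using assms unfolding cluster_models_def by auto
  then show ?thesis by blast
qed

lemma card_cluster_models_le: "card (cluster_models n p s K) \<le> Suc p ^ s * K ^ n"
  unfolding cluster_models_def by (simp add: card_cartesian_product card_PiE card_subsets_card_le)

lemma cluster_model_subspace:
  assumes "(T, h) \<in> cluster_models n p s K"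
  shows "finite (T \<times> h ` {..<n})" and "card (T \<times> h ` {..<n}) \<le> s * K"
    and "orthonormal_on ({..<p} \<times> {..<n}) (T \<times> h ` {..<n}) (cluster_basis n h)"
proof -
  have T: "T \<subseteq> {..<p}" "card T \<le> s" and h: "h ` {..<n} \<subseteq> {..<K}"
    using assms unfolding cluster_models_def by auto
  show "finite (T \<times> h ` {..<n})" using finite_subset[OF T(1)] by simp
  show "card (T \<times> h ` {..<n}) \<le> s * K"
    using T(2) card_mono[OF _ h] by (simp add: card_cartesian_product mult_le_mono)
  show "orthonormal_on ({..<p} \<times> {..<n}) (T \<times> h ` {..<n}) (cluster_basis n h)"
    by (rule orthonormal_on_cluster_basis[OF T(1)])
qed

lemma ThetaK_in_cluster_model:
  assumes "(mu, L) \<in> ThetaK n p s K"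
  shows "\<exists>(T, h)\<in>cluster_models n p s K. \<forall>x\<in>{..<p} \<times> {..<n}.
    proj_on ({..<p} \<times> {..<n}) (T \<times> h ` {..<n}) (cluster_basis n h) (flat (fitted K mu L)) x
      = flat (fitted K mu L) x"
proof -
  have L: "assign_mat n K L" and T: "card (supp_rows p K mu) \<le> s"
    using assms unfolding ThetaK_def by auto
  define h where "h = restrict (cluster_of K L) {..<n}"
  have "(supp_rows p K mu, h) \<in> cluster_models n p s K"
    using T assign_mat_cluster_of(1)[OF L] unfolding cluster_models_def h_def
    by (auto simp: supp_rows_def)
  moreover have "\<forall>x\<in>{..<p} \<times> {..<n}. proj_on ({..<p} \<times> {..<n}) (supp_rows p K mu \<times> h ` {..<n})
      (cluster_basis n h) (flat (fitted K mu L)) x = flat (fitted K mu L) x"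
    using proj_on_cluster_basis_fitted[OF L] by (simp add: h_def)
  ultimately show ?thesis by blast
qed

lemma cmle_risk_le:
  assumes cmle: "is_cmle n p s K est" and truth: "(mu, L) \<in> ThetaK n p s K"
    and "s > 0" and "K > 0"
  shows "(\<integral>\<^sup>+E. ennreal (risk_loss n p K est mu L E) \<partial>noise p n)
    \<le> ennreal (64 * (ln (2 * real (Suc p ^ s * K ^ n) * sqrt 2 ^ (s * K)) + 1))"
proof -
  define I where "I = {..<p} \<times> {..<n}"
  define M where "M = cluster_models n p s K"
  define ts where "ts = flat (fitted K mu L)"
  define fit where "fit = (\<lambda>X. flat (fitted K (fst (est (observe K mu L X))) (snd (est (observe K mu L X)))))"
  have risk: "risk_loss n p K est mu L X = inner_on I (\<lambda>x. fit X x - ts x) (\<lambda>x. fit X x - ts x)" for X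
    unfolding risk_loss_def Let_def frob2_eq_inner_on I_def[symmetric] inner_on_def
    by (intro sum.cong refl) (auto simp: flat_def fit_def ts_def algebra_simps)
  have least_squares: "inner_on I (\<lambda>x. X x + ts x - fit X x) (\<lambda>x. X x + ts x - fit X x) \<le> inner_on I X X"
    for X
  proof -
    have "frob2 p n (\<lambda>j i. observe K mu L X j i - fitted K (fst (est (observe K mu L X)))
        (snd (est (observe K mu L X))) j i) \<le> frob2 p n (\<lambda>j i. observe K mu L X j i - fitted K mu L j i)"
      using cmle truth unfolding is_cmle_def by blast
    then show ?thesis unfolding frob2_eq_inner_on I_def[symmetric]
      by (simp add: inner_on_def flat_def observe_def fit_def ts_def case_prod_beta add_ac)
  qed
  have in_model: "\<exists>m\<in>M. \<forall>x\<in>I. proj_on I ((\<lambda>(T, h). T \<times> h ` {..<n}) m)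
      ((\<lambda>(T, h). cluster_basis n h) m) (fit X) x = fit X x" for X
  proof -
    have "(fst (est (observe K mu L X)), snd (est (observe K mu L X))) \<in> ThetaK n p s K"
      using cmle unfolding is_cmle_def by simp
    from ThetaK_in_cluster_model[OF this] obtain T h where "(T, h) \<in> M"
      and "\<forall>x\<in>I. proj_on I (T \<times> h ` {..<n}) (cluster_basis n h) (fit X) x = fit X x"
      unfolding M_def I_def fit_def by blast
    then show ?thesis by (intro bexI[of _ "(T, h)"]) auto
  qed
  have "(\<integral>\<^sup>+E. ennreal (risk_loss n p K est mu L E) \<partial>noise p n)
      = (\<integral>\<^sup>+X. ennreal (inner_on I (\<lambda>x. fit X x - ts x) (\<lambda>x. fit X x - ts x)) \<partial>gaussian_on I)"
    by (simp add: risk noise_def I_def)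
  also have "\<dots> \<le> ennreal (64 * (ln (2 * real (card M) * sqrt 2 ^ (s * K)) + 1))"
    using finite_cluster_models cluster_models_nonempty \<open>K > 0\<close> \<open>s > 0\<close> cluster_model_subspace
    by (intro least_squares_union_of_subspaces_risk[OF _ _ _ _ _ in_model least_squares])
      (auto simp: I_def M_def)
  also have "\<dots> \<le> ennreal (64 * (ln (2 * real (Suc p ^ s * K ^ n) * sqrt 2 ^ (s * K)) + 1))"
  proof -
    have "real (card M) \<le> real (Suc p ^ s * K ^ n)"
      unfolding M_def by (simp only: of_nat_le_iff card_cluster_models_le)
    moreover have "card M > 0"
      using finite_cluster_models cluster_models_nonempty[OF \<open>K > 0\<close>] unfolding M_def
      by (simp add: card_gt_0_iff)
    ultimately show ?thesis by (intro ennreal_leI mult_left_mono add_right_mono ln_mono) auto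
  qed
  finally show ?thesis .
qed

lemma ln_ge_1_of_ge_3: "x \<ge> 3 \<Longrightarrow> ln x \<ge> (1::real)"
  using exp_le ln_ge_iff[of x 1] by linarith

lemma ln_cluster_models_bound_le:
  fixes n p s K :: nat and C :: real
  assumes n: "n \<ge> 3" and p: "p \<ge> 3" and "s > 0" and "K > 0" and "C > 0"
    and K_ln: "real K * ln (real n) \<le> C * ln (real p)"
  shows "ln (2 * real (Suc p ^ s * K ^ n) * sqrt 2 ^ (s * K)) + 1
    \<le> (4 + C) * (real n * ln (real K) + real s * ln (real p))"
proof -
  have ln_p: "ln (real p) \<ge> 1" and ln_n: "ln (real n) \<ge> 1"
    using n p by (auto intro: ln_ge_1_of_ge_3)
  have "real K \<le> real K * ln (real n)" using mult_left_mono[OF ln_n, of "real K"] by simp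
  then have K: "real K \<le> C * ln (real p)" using K_ln by linarith
  have ln_2: "ln (2::real) \<le> 1" and ln_sqrt_2: "ln (sqrt 2) \<le> 1"
    using ln_le_minus_one[of 2] ln_le_minus_one[of "sqrt 2"] real_sqrt_le_iff[of 2 4] by auto
  have "ln (real (Suc p)) \<le> ln (real p ^ 2)"
    using p by (intro ln_mono) (auto simp: power2_eq_square intro: order_trans[OF _ mult_right_mono[of 3]])
  then have ln_Suc_p: "ln (real (Suc p)) \<le> 2 * ln (real p)" by (simp add: ln_realpow)
  have "real K * ln (sqrt 2) \<le> C * ln (real p)"
    using mult_left_mono[OF ln_sqrt_2, of "real K"] K by simp
  then have sK: "real s * real K * ln (sqrt 2) \<le> real s * (C * ln (real p))"
    using mult_left_mono[of _ _ "real s"] by (simp add: mult.assoc)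
  have s_ln_p: "1 \<le> real s * ln (real p)"
    using mult_mono[of 1 "real s" 1 "ln (real p)"] \<open>s > 0\<close> ln_p by simp
  have "ln (2 * real (Suc p ^ s * K ^ n) * sqrt 2 ^ (s * K)) + 1
      = ln 2 + real s * ln (real (Suc p)) + real n * ln (real K) + real s * real K * ln (sqrt 2) + 1"
    using \<open>K > 0\<close> by (simp add: ln_mult ln_realpow del: of_nat_Suc)
  also have "\<dots> \<le> (4 + C) * (real s * ln (real p)) + real n * ln (real K)"
    using ln_2 mult_left_mono[OF ln_Suc_p, of "real s"] sK s_ln_p by (simp add: algebra_simps)
  also have "\<dots> \<le> (4 + C) * (real n * ln (real K) + real s * ln (real p))"
    using \<open>C > 0\<close> \<open>K > 0\<close> mult_right_mono[of 1 "4 + C" "real n * ln (real K)"]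
    by (simp add: algebra_simps)
  finally show ?thesis .
qed

lemma cmle_risk_rate:
  fixes C :: real
  assumes "is_cmle n p s K est" and "(mu, L) \<in> ThetaK n p s K"
    and "n \<ge> 3" and "p \<ge> 3" and "s > 0" and "K > 0" and "C > 0"
    and "real K * ln (real n) \<le> C * ln (real p)"
  shows "(\<integral>\<^sup>+E. ennreal (risk_loss n p K est mu L E) \<partial>noise p n)
    \<le> ennreal (64 * (4 + C) * (real n * ln (real K) + real s * ln (real p)))"
proof -
  have "(\<integral>\<^sup>+E. ennreal (risk_loss n p K est mu L E) \<partial>noise p n)
      \<le> ennreal (64 * (ln (2 * real (Suc p ^ s * K ^ n) * sqrt 2 ^ (s * K)) + 1))"
    using assms by (intro cmle_risk_le)
  also have "\<dots> \<le> ennreal (64 * ((4 + C) * (real n * ln (real K) + real s * ln (real p))))"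
    using ln_cluster_models_bound_le[of n p s K C] assms by (intro ennreal_leI mult_left_mono) auto
  finally show ?thesis by (simp only: mult.assoc)
qed

theorem theorem3:
  fixes p s K :: "nat \<Rightarrow> nat" and C0 c0 :: real
  assumes "C0 > 0" and "c0 > 0"
    and "\<And>n. p n > 0" and "\<And>n. s n > 0" and "\<And>n. K n > 0"
    and "filterlim (\<lambda>n. real (s n)) at_top sequentially"
    and "\<exists>C>0. \<forall>n. real (K n) * ln (real n) \<le> C * ln (real (p n))"
    and "filterlim (\<lambda>n. real (p n) / real n) at_top sequentially"
  shows "\<exists>c>0. \<forall>\<^sub>F n in sequentially.
           \<forall>est mu L. is_cmle n (p n) (s n) (K n) est
             \<longrightarrow> (risk_loss n (p n) (K n) est mu L) \<in> borel_measurable (noise (p n) n)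
             \<longrightarrow> (mu, L) \<in> ThetaStar C0 c0 n (p n) (s n) (K n)
             \<longrightarrow> (\<integral>\<^sup>+ E. ennreal (risk_loss n (p n) (K n) est mu L E) \<partial>noise (p n) n)
                 \<le> ennreal (c * (real n * ln (real (K n)) + real (s n) * ln (real (p n))))"
proof -
  obtain C where C: "C > 0" "\<And>n. real (K n) * ln (real n) \<le> C * ln (real (p n))"
    using assms(7) by blast
  have "\<forall>\<^sub>F n in sequentially. 1 \<le> real (p n) / real n"
    using assms(8) by (simp add: filterlim_at_top)
  moreover have "\<forall>\<^sub>F n in sequentially. 3 \<le> n" by (rule eventually_ge_at_top)
  ultimately have "\<forall>\<^sub>F n in sequentially. 3 \<le> n \<and> 3 \<le> p n"
    by eventually_elim (auto simp: le_divide_eq)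
  then have "\<forall>\<^sub>F n in sequentially. \<forall>est mu L. is_cmle n (p n) (s n) (K n) est
      \<longrightarrow> (mu, L) \<in> ThetaStar C0 c0 n (p n) (s n) (K n)
      \<longrightarrow> (\<integral>\<^sup>+ E. ennreal (risk_loss n (p n) (K n) est mu L E) \<partial>noise (p n) n)
          \<le> ennreal (64 * (4 + C) * (real n * ln (real (K n)) + real (s n) * ln (real (p n))))"
    by eventually_elim (intro allI impI cmle_risk_rate; use C assms(4,5) in \<open>auto simp: ThetaStar_def\<close>)
  then show ?thesis using C(1) by (intro exI[of _ "64 * (4 + C)"]) (auto elim!: eventually_mono)
qed

end
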